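(* Let $n\ge 2$, $d_1,\ldots,d_n\in\mathbb{N}$, and let $d$ be a dependence measure, i.e. a map assigning a real number $d(X_1,\ldots,X_n)$ to random vectors $X_i=(X_{i,1},\ldots,X_{i,d_i})$ with values in $\mathbb{R}^{d_i}$, where $d(X_1,\ldots,X_n)$ depends only on the joint distribution of $(X_1,\ldots,X_n)$. Assume $d$ is translation invariant (i.e. $d(X_1+a_1,\ldots,X_n+a_n)=d(X_1,\ldots,X_n)$ for all constant vectors $a_i\in\mathbb{R}^{d_i}$) and symmetric in each element (i.e. the value of $d$ does not change if any single element $X_{i,k}$ is replaced by $-X_{i,k}$). Define $$d_{cop}(X_1,\ldots,X_n) := d\big(T_{X_1}(X_1,U_1),\ldots,T_{X_n}(X_n,U_n)\big),$$ where $T_{X_i}(X_i,U_i) := \big(T_{X_{i,1}}(X_{i,1},U_{i,1}),\ldots,T_{X_{i,d_i}}(X_{i,d_i},U_{i,d_i})\big)$, for a real random variable $Y$ we set $T_Y(y,u):=\mathbb{P}(Y<y)+u\,\mathbb{P}(Y=y)$, and the $U_{i,k}$ ($i=1,\ldots,n$, $k=1,\ldots,d_i$) are independent random variables uniformly distributed on $[0,1]$, independent of $(X_1,\ldots,X_n)$. Then for all strictly monotone (each either strictly increasing or strictly decreasing) functions $g_{i,k}:\mathbb{R}\to\mathbb{R}$, $i=1,\ldots,n$, $k=1,\ldots,d_i$, $$d_{cop}(X_1,\ldots,X_n) = d_{cop}\big(g_1(X_1),\ldots,g_n(X_n)\big),$$ where $g_i(X_i):=(g_{i,1}(X_{i,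1}),\ldots,g_{i,d_i}(X_{i,d_i}))$.
   Context: The random variable $T_Y(Y,U)$ with $U$ uniform on $[0,1]$ independent of $Y$ is called the distributional transform of $Y$; for a random vector it is taken element-wise with independent uniform variables for each element. The "elements" of the random vector $X_i$ are its univariate coordinates $X_{i,k}$. *)

theory Defs
  imports "HOL-Probability.Probability"
begin

text \<open>Index set of all elements X_{i,k}, i < n, k < d_i (0-based indices).\<close>
definition idx :: "nat \<Rightarrow> (nat \<Rightarrow> nat) \<Rightarrow> (nat \<times> nat) set" where
  "idx n ds = {(i, k). i < n \<and> k < ds i}"

text \<open>Joint distributions of (X_1,...,X_n) are probability measures on the product space
  indexed by the elements; a dependence measure is a real-valued map on such laws.\<close>
abbreviation joint_space :: "(nat \<times> nat) set \<Rightarrow> ((nat \<times> nat) \<Rightarrow> real) measure" where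
  "joint_space I \<equiv> PiM I (\<lambda>_. borel)"

definition is_joint_law :: "(nat \<times> nat) set \<Rightarrow> ((nat \<times> nat) \<Rightarrow> real) measure \<Rightarrow> bool" where
  "is_joint_law I P \<longleftrightarrow> prob_space P \<and> sets P = sets (joint_space I)"

definition translation_invariant ::
  "(((nat \<times> nat) \<Rightarrow> real) measure \<Rightarrow> real) \<Rightarrow> (nat \<times> nat) set \<Rightarrow> bool" where
  "translation_invariant d I \<longleftrightarrow>
     (\<forall>P a. is_joint_law I P \<longrightarrow>
        d (distr P (joint_space I) (\<lambda>x. \<lambda>j\<in>I. x j + a j)) = d P)"

definition elementwise_symmetric ::
  "(((nat \<times> nat) \<Rightarrow> real) measure \<Rightarrow> real) \<Rightarrow> (nat \<times> nat) set \<Rightarrow> bool" where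
  "elementwise_symmetric d I \<longleftrightarrow>
     (\<forall>P j. is_joint_law I P \<longrightarrow> j \<in> I \<longrightarrow>
        d (distr P (joint_space I) (\<lambda>x. \<lambda>j'\<in>I. if j' = j then - x j' else x j')) = d P)"

text \<open>Distributional transform T_Y(y,u) = P(Y < y) + u P(Y = y), where mu is the law of Y.\<close>
definition distr_transform :: "real measure \<Rightarrow> real \<Rightarrow> real \<Rightarrow> real" where
  "distr_transform mu y u = measure mu {..<y} + u * measure mu {y}"

definition indep_uniforms ::
  "'a measure \<Rightarrow> (nat \<times> nat) set \<Rightarrow> ((nat \<times> nat) \<Rightarrow> 'a \<Rightarrow> real) \<Rightarrow> ((nat \<times> nat) \<Rightarrow> 'a \<Rightarrow> real) \<Rightarrow> bool" where
  "indep_uniforms M I X U \<longleftrightarrow>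
     (\<forall>j\<in>I. U j \<in> borel_measurable M \<and> distr M borel (U j) = uniform_measure lborel {0..1}) \<and>
     prob_space.indep_vars M (\<lambda>_. borel) U I \<and>
     prob_space.indep_var M (joint_space I) (\<lambda>\<omega>. \<lambda>j\<in>I. X j \<omega>) (joint_space I) (\<lambda>\<omega>. \<lambda>j\<in>I. U j \<omega>)"

definition dcop ::
  "(((nat \<times> nat) \<Rightarrow> real) measure \<Rightarrow> real) \<Rightarrow> 'a measure \<Rightarrow> (nat \<times> nat) set \<Rightarrow>
   ((nat \<times> nat) \<Rightarrow> 'a \<Rightarrow> real) \<Rightarrow> ((nat \<times> nat) \<Rightarrow> 'a \<Rightarrow> real) \<Rightarrow> real" where
  "dcop d M I X U =
     d (distr M (joint_space I)
          (\<lambda>\<omega>. \<lambda>j\<in>I. distr_transform (distr M borel (X j)) (X j \<omega>) (U j \<omega>)))"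

end

theory Submission
  imports Defs
begin

text \<open>
  A strictly increasing g leaves the distributional transform unchanged,
  T_{g(Y)}(g y, u) = T_Y(y, u), and a strictly decreasing g reflects it,
  T_{g(Y)}(g y, u) = 1 - T_Y(y, 1 - u).  Since U is independent of X, the law of
  T_X(X, U) depends only on the law L of X: it is the image of L x Unif([0,1]^I)
  under (x, u) |-> (T_{X_j}(x_j, u_j))_j.  As Unif([0,1]) is invariant under
  u |-> 1 - u, the law for g(X) is therefore the law for X with the coordinates of
  the decreasing components reflected, y_j |-> 1 - y_j.  Such a reflection is a
  sign change of single elements followed by a translation, and d is invariant
  under both.
\<close>

section \<open>Strictly monotone maps and the distributional transform\<close>

lemma borel_measurable_strict_antimono:
  fixes g :: "real \<Rightarrow> real"
  assumes "strict_antimono_on UNIV g"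
  shows "g \<in> borel_measurable borel"
proof -
  have "mono (\<lambda>x. - g x)"
    using assms by (auto simp: mono_def monotone_on_def le_less)
  then show ?thesis
    using borel_measurable_uminus[OF borel_measurable_mono] by fastforce
qed

lemma borel_measurable_strict_monotone:
  fixes g :: "real \<Rightarrow> real"
  assumes "strict_mono g \<or> strict_antimono_on UNIV g"
  shows "g \<in> borel_measurable borel"
  using assms borel_measurable_mono[OF strict_mono_mono] borel_measurable_strict_antimono by blast

lemma measurable_componentwise:
  assumes "\<And>j. j \<in> I \<Longrightarrow> g j \<in> borel_measurable borel"
  shows "(\<lambda>x. \<lambda>j\<in>I. g j (x j)) \<in> measurable (PiM I (\<lambda>_. borel)) (PiM I (\<lambda>_. borel))"
proof (rule measurable_restrict)
  fix j assume j: "j \<in> I"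
  show "(\<lambda>x. g j (x j)) \<in> borel_measurable (PiM I (\<lambda>_. borel))"
    by (rule measurable_compose[OF measurable_component_singleton[OF j] assms[OF j]])
qed

lemma borel_measurable_distr_transform:
  assumes "finite_measure mu" "sets mu = sets borel"
    and "f \<in> borel_measurable N" "h \<in> borel_measurable N"
  shows "(\<lambda>x. distr_transform mu (f x) (h x)) \<in> borel_measurable N"
proof -
  interpret finite_measure mu by fact
  have [measurable]: "(\<lambda>y. measure mu {..<y}) \<in> borel_measurable borel"
    "(\<lambda>y. measure mu {..y}) \<in> borel_measurable borel"
    by (auto intro!: borel_measurable_mono finite_measure_mono simp: mono_def assms(2))
  have "measure mu {y} = measure mu {..y} - measure mu {..<y}" for y :: real
  proof -
    have "{y} = {..y} - {..<y}" by auto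
    then show ?thesis
      using assms(2) by (simp only:) (rule finite_measure_Diff; auto)
  qed
  then have [measurable]: "(\<lambda>y. measure mu {y}) \<in> borel_measurable borel"
    by simp
  show ?thesis
    unfolding distr_transform_def using assms(3,4) by measurable
qed

lemma distr_transform_distr_strict_mono:
  fixes g :: "real \<Rightarrow> real"
  assumes "sets mu = sets borel" "strict_mono g"
  shows "distr_transform (distr mu borel g) (g y) u = distr_transform mu y u"
proof -
  have "g \<in> measurable mu borel"
    using borel_measurable_mono[OF strict_mono_mono[OF assms(2)]]
    by (simp add: measurable_cong_sets[OF assms(1) refl])
  moreover have "g -` {..<g y} = {..<y}" "g -` {g y} = {y}"
    using assms(2) by (auto simp: strict_mono_less strict_mono_eq)
  ultimately show ?thesis
    using sets_eq_imp_space_eq[OF assms(1)] by (simp add: distr_transform_def measure_distr)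
qed

lemma distr_transform_distr_strict_antimono:
  fixes g :: "real \<Rightarrow> real"
  assumes "prob_space mu" "sets mu = sets borel" "strict_antimono_on UNIV g"
  shows "distr_transform (distr mu borel g) (g y) u = 1 - distr_transform mu y (1 - u)"
proof -
  interpret prob_space mu by fact
  have "g \<in> measurable mu borel"
    using borel_measurable_strict_antimono[OF assms(3)]
    by (simp add: measurable_cong_sets[OF assms(2) refl])
  moreover have "g -` {..<g y} = {y<..}" "g -` {g y} = {y}"
    using assms(3) by (auto simp: monotone_on_def) (metis linorder_neqE_linordered_idom order.asym)+
  moreover have "measure mu {y<..} = 1 - measure mu {..<y} - measure mu {y}"
  proof -
    have "{y<..} = space mu - ({..<y} \<union> {y})"
      using sets_eq_imp_space_eq[OF assms(2)] by auto
    moreover have "prob (space mu - ({..<y} \<union> {y})) = 1 - prob ({..<y} \<union> {y})"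
      by (rule prob_compl) (simp add: assms(2))
    moreover have "prob ({..<y} \<union> {y}) = prob {..<y} + prob {y}"
      by (rule finite_measure_Union) (auto simp: assms(2))
    ultimately show ?thesis
      by (simp only:)
  qed
  ultimately show ?thesis
    using sets_eq_imp_space_eq[OF assms(2)]
    by (simp add: distr_transform_def measure_distr algebra_simps)
qed

section \<open>Reflecting uniform coordinates\<close>

lemma uniform_measure_01_reflect:
  "distr (uniform_measure lborel {0..1::real}) borel (\<lambda>x. 1 - x) = uniform_measure lborel {0..1}"
proof (rule measure_eqI)
  fix A :: "real set" assume "A \<in> sets (distr (uniform_measure lborel {0..1}) borel (\<lambda>x. 1 - x))"
  then have [measurable]: "A \<in> sets borel" by simp
  define B where "B = {0..1} \<inter> A"
  have B: "B \<in> sets borel" and reflect_B: "(\<lambda>x::real. 1 - x) -` B \<in> sets borel"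
    using measurable_sets_borel[of "\<lambda>x::real. 1 - x" borel B] by (simp_all add: B_def)
  have "emeasure (distr (uniform_measure lborel {0..1}) borel (\<lambda>x. 1 - x)) A
      = emeasure lborel ((\<lambda>x. 1 - x) -` B)"
  proof -
    have "(\<lambda>x. 1 - x) -` A \<in> sets borel"
      using measurable_sets_borel[of "\<lambda>x::real. 1 - x" borel A] by simp
    moreover have "{0..1} \<inter> (\<lambda>x. 1 - x) -` A = (\<lambda>x::real. 1 - x) -` B"
      by (auto simp: B_def)
    ultimately show ?thesis by (simp add: emeasure_distr divide_ennreal_def)
  qed
  also have "\<dots> = (\<integral>\<^sup>+x. indicator ((\<lambda>x. 1 - x) -` B) x \<partial>lborel)"
    using reflect_B by simp
  also have "\<dots> = (\<integral>\<^sup>+x. indicator B (1 - x) \<partial>lborel)"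
    by (simp add: indicator_def)
  also have "\<dots> = (\<integral>\<^sup>+x. indicator B x \<partial>lborel)"
    using nn_integral_real_affine[of "indicator B" "-1" 1] B by simp
  also have "\<dots> = emeasure (uniform_measure lborel {0..1}) A"
    using B by (simp add: B_def Int_commute divide_ennreal_def)
  finally show "emeasure (distr (uniform_measure lborel {0..1}) borel (\<lambda>x. 1 - x)) A
      = emeasure (uniform_measure lborel {0..1}) A" .
qed simp

lemma distr_PiM_componentwise:
  assumes fin: "finite I" and "product_prob_space M" "product_prob_space M'"
    and [measurable]: "\<And>i. i \<in> I \<Longrightarrow> f i \<in> measurable (M i) (M' i)"
  shows "distr (PiM I M) (PiM I M') (\<lambda>x. \<lambda>i\<in>I. f i (x i)) = PiM I (\<lambda>i. distr (M i) (M' i) (f i))"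
proof -
  interpret M: product_prob_space M by fact
  interpret M': product_prob_space M' by fact
  define N where "N = (\<lambda>i. if i \<in> I then distr (M i) (M' i) (f i) else M' i)"
  interpret N: product_prob_space N
    by (intro product_prob_spaceI) (auto simp: N_def M'.prob_space intro: M.M.prob_space_distr)
  have sets_N: "sets (PiM I N) = sets (PiM I M')"
    unfolding N_def by (intro sets_PiM_cong) auto
  have "distr (PiM I M) (PiM I M') (\<lambda>x. \<lambda>i\<in>I. f i (x i)) = PiM I N"
  proof (rule N.PiM_eqI[OF fin])
    fix A assume A: "\<And>i. i \<in> I \<Longrightarrow> A i \<in> sets (N i)"
    have "Pi\<^sub>E I A \<in> sets (PiM I M')"
      unfolding sets_N[symmetric] by (intro sets_PiM_I_finite fin A)
    moreover have "(\<lambda>x. \<lambda>i\<in>I. f i (x i)) \<in> measurable (PiM I M) (PiM I M')"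
      by (intro measurable_restrict measurable_compose[OF measurable_component_singleton]) auto
    ultimately have "emeasure (distr (PiM I M) (PiM I M') (\<lambda>x. \<lambda>i\<in>I. f i (x i))) (Pi\<^sub>E I A)
        = emeasure (PiM I M) ((\<lambda>x. \<lambda>i\<in>I. f i (x i)) -` Pi\<^sub>E I A \<inter> space (PiM I M))"
      by (intro emeasure_distr)
    also have "(\<lambda>x. \<lambda>i\<in>I. f i (x i)) -` Pi\<^sub>E I A \<inter> space (PiM I M)
        = Pi\<^sub>E I (\<lambda>i. f i -` A i \<inter> space (M i))"
      by (auto simp: space_PiM PiE_def Pi_def extensional_def)
    also have "emeasure (PiM I M) (Pi\<^sub>E I (\<lambda>i. f i -` A i \<inter> space (M i)))
        = (\<Prod>i\<in>I. emeasure (M i) (f i -` A i \<inter> space (M i)))"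
      using A by (intro M.emeasure_PiM fin) (auto simp: N_def)
    also have "\<dots> = (\<Prod>i\<in>I. emeasure (N i) (A i))"
      using A by (intro prod.cong) (auto simp: N_def emeasure_distr)
    finally show "emeasure (distr (PiM I M) (PiM I M') (\<lambda>x. \<lambda>i\<in>I. f i (x i))) (Pi\<^sub>E I A)
        = (\<Prod>i\<in>I. emeasure (N i) (A i))" .
  qed (simp add: sets_N)
  also have "PiM I N = PiM I (\<lambda>i. distr (M i) (M' i) (f i))"
    by (intro PiM_cong) (auto simp: N_def)
  finally show ?thesis .
qed

definition reflect_coords :: "'i set \<Rightarrow> 'i set \<Rightarrow> ('i \<Rightarrow> real) \<Rightarrow> 'i \<Rightarrow> real" where
  "reflect_coords I S x = (\<lambda>j\<in>I. if j \<in> S then 1 - x j else x j)"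

lemma measurable_reflect_coords [measurable]:
  "reflect_coords I S \<in> measurable (PiM I (\<lambda>_. borel)) (PiM I (\<lambda>_. borel))"
  unfolding reflect_coords_def by measurable

lemma measurable_reflect_coords_uniform:
  "reflect_coords I S
    \<in> measurable (PiM I (\<lambda>_. uniform_measure lborel {0..1})) (PiM I (\<lambda>_. borel))"
proof -
  have sets_Q: "sets (PiM I (\<lambda>_. uniform_measure lborel {0..1::real})) = sets (PiM I (\<lambda>_. borel))"
    by (rule sets_PiM_cong) simp_all
  show ?thesis
    unfolding measurable_cong_sets[OF sets_Q refl] by (rule measurable_reflect_coords)
qed

lemma PiM_uniform_reflect_coords:
  assumes "finite I"
  shows "distr (PiM I (\<lambda>_. uniform_measure lborel {0..1::real})) (PiM I (\<lambda>_. borel)) (reflect_coords I S)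
    = PiM I (\<lambda>_. uniform_measure lborel {0..1})"
proof -
  let ?U = "uniform_measure lborel {0..1::real}"
  define f where "f i x = (if i \<in> S then 1 - x else x)" for i and x :: real
  have prod_U: "product_prob_space (\<lambda>_. ?U)"
    by (intro product_prob_spaceI prob_space_uniform_measure) simp_all
  have sets_U: "sets ?U = sets borel"
    by simp
  have "distr (PiM I (\<lambda>_. ?U)) (PiM I (\<lambda>_. borel)) (reflect_coords I S)
      = distr (PiM I (\<lambda>_. ?U)) (PiM I (\<lambda>_. ?U)) (\<lambda>x. \<lambda>i\<in>I. f i (x i))"
    by (rule distr_cong[OF refl sets_PiM_cong]) (simp_all add: reflect_coords_def f_def)
  also have "\<dots> = PiM I (\<lambda>i. distr ?U ?U (f i))"
    by (rule distr_PiM_componentwise[OF assms prod_U prod_U])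
      (simp add: measurable_cong_sets[OF sets_U sets_U] f_def)
  also have "\<dots> = PiM I (\<lambda>_. ?U)"
  proof (intro PiM_cong refl)
    fix i
    have "distr ?U ?U (f i) = distr ?U borel (f i)"
      by (rule distr_cong) simp_all
    then show "distr ?U ?U (f i) = ?U"
      by (cases "i \<in> S") (simp_all add: f_def[abs_def] uniform_measure_01_reflect distr_id2)
  qed
  finally show ?thesis .
qed

lemma pair_measure_distr_reflect_coords:
  fixes I :: "'i set" and G :: "'a \<Rightarrow> 'i \<Rightarrow> 'b::topological_space"
  assumes "finite I" "G \<in> measurable L (PiM I (\<lambda>_. borel))"
  shows "distr L (PiM I (\<lambda>_. borel)) G \<Otimes>\<^sub>M PiM I (\<lambda>_. uniform_measure lborel {0..1})
    = distr (L \<Otimes>\<^sub>M PiM I (\<lambda>_. uniform_measure lborel {0..1}))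
        (PiM I (\<lambda>_. borel) \<Otimes>\<^sub>M PiM I (\<lambda>_. borel)) (\<lambda>(x, u). (G x, reflect_coords I S u))"
proof -
  let ?P = "PiM I (\<lambda>_. borel) :: ('i \<Rightarrow> real) measure"
  let ?Q = "PiM I (\<lambda>_. uniform_measure lborel {0..1::real})"
  have "prob_space ?Q"
    by (intro prob_space_PiM prob_space_uniform_measure) simp_all
  then have "sigma_finite_measure (distr ?Q ?P (reflect_coords I S))"
    unfolding PiM_uniform_reflect_coords[OF assms(1)] by (rule prob_space_imp_sigma_finite)
  then have "distr L (PiM I (\<lambda>_. borel)) G \<Otimes>\<^sub>M distr ?Q ?P (reflect_coords I S)
      = distr (L \<Otimes>\<^sub>M ?Q) (PiM I (\<lambda>_. borel) \<Otimes>\<^sub>M ?P) (\<lambda>(x, u). (G x, reflect_coords I S u))"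
    by (rule pair_measure_distr[OF assms(2) measurable_reflect_coords_uniform])
  then show ?thesis
    unfolding PiM_uniform_reflect_coords[OF assms(1)] .
qed

section \<open>Invariance of the dependence measure under reflections\<close>

definition negate_coords :: "'i set \<Rightarrow> 'i set \<Rightarrow> ('i \<Rightarrow> real) \<Rightarrow> 'i \<Rightarrow> real" where
  "negate_coords I S x = (\<lambda>j\<in>I. if j \<in> S then - x j else x j)"

lemma measurable_negate_coords [measurable]:
  "negate_coords I S \<in> measurable (PiM I (\<lambda>_. borel)) (PiM I (\<lambda>_. borel))"
  unfolding negate_coords_def by measurable

lemma is_joint_law_distr:
  assumes "is_joint_law I L" "f \<in> measurable (joint_space I) (joint_space I)"
  shows "is_joint_law I (distr L (joint_space I) f)"
proof -
  have sets_L: "sets L = sets (joint_space I)"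
    using assms(1) unfolding is_joint_law_def by simp
  have "f \<in> measurable L (joint_space I)"
    using assms(2) by (simp only: measurable_cong_sets[OF sets_L refl])
  then show ?thesis
    using assms(1) unfolding is_joint_law_def by (simp add: prob_space.prob_space_distr)
qed

lemma distr_joint_law_comp:
  assumes "is_joint_law I L"
    and "f \<in> measurable (joint_space I) (joint_space I)" "g \<in> measurable (joint_space I) (joint_space I)"
  shows "distr L (joint_space I) (g \<circ> f) = distr (distr L (joint_space I) f) (joint_space I) g"
proof -
  have sets_L: "sets L = sets (joint_space I)"
    using assms(1) unfolding is_joint_law_def by simp
  have "f \<in> measurable L (joint_space I)"
    using assms(2) by (simp only: measurable_cong_sets[OF sets_L refl])
  then show ?thesis
    using assms(3) by (simp add: distr_distr)
qed

lemma elementwise_symmetric_negate_coords: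
  assumes sym: "elementwise_symmetric d I" and L: "is_joint_law I L"
    and "finite S" "S \<subseteq> I"
  shows "d (distr L (joint_space I) (negate_coords I S)) = d L"
  using assms(3,4)
proof (induction S rule: finite_induct)
  case empty
  have sets_L: "sets L = sets (joint_space I)"
    using L unfolding is_joint_law_def by simp
  have "negate_coords I {} x = x" if "x \<in> space L" for x
  proof -
    have "x \<in> space (joint_space I)"
      using that sets_eq_imp_space_eq[OF sets_L] by simp
    then show ?thesis
      unfolding negate_coords_def space_PiM by (simp add: PiE_restrict)
  qed
  then have "distr L (joint_space I) (negate_coords I {}) = distr L (joint_space I) (\<lambda>x. x)"
    by (intro distr_cong) simp_all
  also have "\<dots> = L"
    using sets_L by (intro distr_id2) simp
  finally show ?case by simp
next
  case (insert s S)
  have "negate_coords I (insert s S) = negate_coords I {s} \<circ> negate_coords I S"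
    using insert.hyps(2) by (auto simp: negate_coords_def fun_eq_iff)
  then have "distr L (joint_space I) (negate_coords I (insert s S))
      = distr (distr L (joint_space I) (negate_coords I S)) (joint_space I) (negate_coords I {s})"
    using distr_joint_law_comp[OF L measurable_negate_coords measurable_negate_coords] by simp
  also have "d \<dots> = d (distr L (joint_space I) (negate_coords I S))"
  proof -
    have "s \<in> I"
      using insert.prems by simp
    then have "d (distr P (joint_space I) (\<lambda>x. \<lambda>j'\<in>I. if j' = s then - x j' else x j')) = d P"
      if "is_joint_law I P" for P
      using sym that unfolding elementwise_symmetric_def by blast
    moreover have "negate_coords I {s} = (\<lambda>x. \<lambda>j'\<in>I. if j' = s then - x j' else x j')"
      by (simp add: negate_coords_def[abs_def])
    ultimately show ?thesis
      using is_joint_law_distr[OF L measurable_negate_coords] by simp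
  qed
  also have "\<dots> = d L"
    using insert by simp
  finally show ?case .
qed

lemma dependence_measure_reflect_coords:
  assumes "translation_invariant d I" "elementwise_symmetric d I" "is_joint_law I L"
    and "finite S" "S \<subseteq> I"
  shows "d (distr L (joint_space I) (reflect_coords I S)) = d L"
proof -
  define a where "a j = (if j \<in> S then 1 else 0 :: real)" for j
  have "reflect_coords I S = (\<lambda>x. \<lambda>j\<in>I. x j + a j) \<circ> negate_coords I S"
    by (auto simp: reflect_coords_def negate_coords_def a_def fun_eq_iff)
  then have "distr L (joint_space I) (reflect_coords I S)
      = distr (distr L (joint_space I) (negate_coords I S)) (joint_space I) (\<lambda>x. \<lambda>j\<in>I. x j + a j)"
    using distr_joint_law_comp[OF assms(3) measurable_negate_coords] by simp
  also have "d \<dots> = d (distr L (joint_space I) (negate_coords I S))"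
    using assms(1) is_joint_law_distr[OF assms(3) measurable_negate_coords]
    unfolding translation_invariant_def by blast
  also have "\<dots> = d L"
    using elementwise_symmetric_negate_coords assms(2-5) by blast
  finally show ?thesis .
qed

section \<open>The law of the distributional transform\<close>

definition distr_transform_vec ::
  "'i set \<Rightarrow> ('i \<Rightarrow> real) measure \<Rightarrow> ('i \<Rightarrow> real) \<times> ('i \<Rightarrow> real) \<Rightarrow> 'i \<Rightarrow> real" where
  "distr_transform_vec I L = (\<lambda>(x, u). \<lambda>j\<in>I. distr_transform (distr L borel (\<lambda>x. x j)) (x j) (u j))"

definition copula_law :: "'i set \<Rightarrow> ('i \<Rightarrow> real) measure \<Rightarrow> ('i \<Rightarrow> real) measure" where
  "copula_law I L = distr (L \<Otimes>\<^sub>M PiM I (\<lambda>_. uniform_measure lborel {0..1}))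
     (PiM I (\<lambda>_. borel)) (distr_transform_vec I L)"

lemma measurable_distr_transform_vec:
  assumes "finite_measure L" "sets L = sets (PiM I (\<lambda>_. borel))"
  shows "distr_transform_vec I L
    \<in> measurable (PiM I (\<lambda>_. borel) \<Otimes>\<^sub>M PiM I (\<lambda>_. borel)) (PiM I (\<lambda>_. borel))"
  unfolding distr_transform_vec_def split_beta'
proof (rule measurable_restrict)
  fix j assume j: "j \<in> I"
  have "(\<lambda>x. x j) \<in> measurable L borel"
    using j by (simp add: measurable_cong_sets[OF assms(2) refl])
  then have "finite_measure (distr L borel (\<lambda>x. x j))"
    by (rule finite_measure.finite_measure_distr[OF assms(1)])
  moreover have "(\<lambda>p. fst p j) \<in> borel_measurable (PiM I (\<lambda>_. borel) \<Otimes>\<^sub>M PiM I (\<lambda>_. borel))"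
    "(\<lambda>p. snd p j) \<in> borel_measurable (PiM I (\<lambda>_. borel) \<Otimes>\<^sub>M PiM I (\<lambda>_. borel))"
    using j by measurable
  ultimately show "(\<lambda>p. distr_transform (distr L borel (\<lambda>x. x j)) (fst p j) (snd p j))
      \<in> borel_measurable (PiM I (\<lambda>_. borel) \<Otimes>\<^sub>M PiM I (\<lambda>_. borel))"
    by (intro borel_measurable_distr_transform) simp_all
qed

lemma sets_copula_law [simp]: "sets (copula_law I L) = sets (PiM I (\<lambda>_. borel))"
  by (simp add: copula_law_def)

lemma measurable_distr_transform_vec_uniform:
  assumes "finite_measure L" "sets L = sets (PiM I (\<lambda>_. borel))"
  shows "distr_transform_vec I L
    \<in> measurable (L \<Otimes>\<^sub>M PiM I (\<lambda>_. uniform_measure lborel {0..1})) (PiM I (\<lambda>_. borel))"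
proof -
  have sets_LQ: "sets (L \<Otimes>\<^sub>M PiM I (\<lambda>_. uniform_measure lborel {0..1::real}))
      = sets (PiM I (\<lambda>_. borel) \<Otimes>\<^sub>M PiM I (\<lambda>_. borel))"
    using assms(2) by (intro sets_pair_measure_cong sets_PiM_cong) simp_all
  show ?thesis
    using measurable_distr_transform_vec[OF assms]
    by (simp only: measurable_cong_sets[OF sets_LQ refl])
qed

lemma prob_space_copula_law:
  assumes "prob_space L" "sets L = sets (PiM I (\<lambda>_. borel))"
  shows "prob_space (copula_law I L)"
proof -
  have "prob_space (PiM I (\<lambda>_. uniform_measure lborel {0..1::real}))"
    by (intro prob_space_PiM prob_space_uniform_measure) simp_all
  then have "prob_space (L \<Otimes>\<^sub>M PiM I (\<lambda>_. uniform_measure lborel {0..1::real}))"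
    by (rule prob_space_pair[OF assms(1)])
  then show ?thesis
    unfolding copula_law_def
    using measurable_distr_transform_vec_uniform[OF prob_space.finite_measure[OF assms(1)] assms(2)]
    by (rule prob_space.prob_space_distr)
qed

lemma joint_law_indep_uniforms:
  assumes "prob_space M" "I \<noteq> {}" "indep_uniforms M I X U"
  shows "distr M (joint_space I \<Otimes>\<^sub>M joint_space I) (\<lambda>\<omega>. (\<lambda>j\<in>I. X j \<omega>, \<lambda>j\<in>I. U j \<omega>))
    = distr M (joint_space I) (\<lambda>\<omega>. \<lambda>j\<in>I. X j \<omega>) \<Otimes>\<^sub>M PiM I (\<lambda>_. uniform_measure lborel {0..1})"
proof -
  interpret prob_space M by fact
  have U_meas: "\<And>j. j \<in> I \<Longrightarrow> U j \<in> borel_measurable M"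
    and U_uniform: "\<And>j. j \<in> I \<Longrightarrow> distr M borel (U j) = uniform_measure lborel {0..1}"
    and U_indep: "indep_vars (\<lambda>_. borel) U I"
    and XU_indep: "indep_var (joint_space I) (\<lambda>\<omega>. \<lambda>j\<in>I. X j \<omega>) (joint_space I) (\<lambda>\<omega>. \<lambda>j\<in>I. U j \<omega>)"
    using assms(3) unfolding indep_uniforms_def by auto
  have "distr M (joint_space I) (\<lambda>\<omega>. \<lambda>j\<in>I. U j \<omega>) = PiM I (\<lambda>j. distr M borel (U j))"
    using indep_vars_iff_distr_eq_PiM'[OF assms(2), where M'="\<lambda>_. borel" and X=U] U_meas U_indep
    by simp
  also have "\<dots> = PiM I (\<lambda>_. uniform_measure lborel {0..1})"
    by (rule PiM_cong) (simp_all add: U_uniform)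
  finally show ?thesis
    using XU_indep unfolding indep_var_distribution_eq by simp
qed

lemma distr_transform_law_eq_copula_law:
  assumes "prob_space M" "I \<noteq> {}"
    and X: "\<And>j. j \<in> I \<Longrightarrow> X j \<in> borel_measurable M" and U: "indep_uniforms M I X U"
  shows "distr M (joint_space I) (\<lambda>\<omega>. \<lambda>j\<in>I. distr_transform (distr M borel (X j)) (X j \<omega>) (U j \<omega>))
    = copula_law I (distr M (joint_space I) (\<lambda>\<omega>. \<lambda>j\<in>I. X j \<omega>))"
proof -
  let ?P = "joint_space I"
  define Xv where "Xv \<omega> = (\<lambda>j\<in>I. X j \<omega>)" for \<omega>
  define Uv where "Uv \<omega> = (\<lambda>j\<in>I. U j \<omega>)" for \<omega>
  define PX where "PX = distr M ?P Xv"
  have Xv_meas: "Xv \<in> measurable M ?P"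
    unfolding Xv_def by (rule measurable_restrict) (rule X)
  have Uv_meas: "Uv \<in> measurable M ?P"
    using U unfolding Uv_def indep_uniforms_def by (intro measurable_restrict) simp
  have marginal: "distr PX borel (\<lambda>x. x j) = distr M borel (X j)" if "j \<in> I" for j
  proof -
    have "distr PX borel (\<lambda>x. x j) = distr M borel ((\<lambda>x. x j) \<circ> Xv)"
      unfolding PX_def by (rule distr_distr[OF measurable_component_singleton[OF that] Xv_meas])
    also have "(\<lambda>x. x j) \<circ> Xv = X j"
      using that by (simp add: Xv_def fun_eq_iff)
    finally show ?thesis .
  qed
  have H_meas: "distr_transform_vec I PX \<in> measurable (?P \<Otimes>\<^sub>M ?P) ?P"
    using prob_space.prob_space_distr[OF assms(1) Xv_meas] unfolding PX_def
    by (intro measurable_distr_transform_vec) (simp_all add: prob_space.finite_measure)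
  have XU_meas: "(\<lambda>\<omega>. (Xv \<omega>, Uv \<omega>)) \<in> measurable M (?P \<Otimes>\<^sub>M ?P)"
    using Xv_meas Uv_meas by measurable
  have "(\<lambda>\<omega>. \<lambda>j\<in>I. distr_transform (distr M borel (X j)) (X j \<omega>) (U j \<omega>))
      = distr_transform_vec I PX \<circ> (\<lambda>\<omega>. (Xv \<omega>, Uv \<omega>))"
    by (simp add: fun_eq_iff distr_transform_vec_def Xv_def Uv_def marginal cong: restrict_cong)
  then have "distr M ?P (\<lambda>\<omega>. \<lambda>j\<in>I. distr_transform (distr M borel (X j)) (X j \<omega>) (U j \<omega>))
      = distr (distr M (?P \<Otimes>\<^sub>M ?P) (\<lambda>\<omega>. (Xv \<omega>, Uv \<omega>))) ?P (distr_transform_vec I PX)"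
    by (simp add: distr_distr[OF H_meas XU_meas])
  also have "\<dots> = copula_law I PX"
    unfolding copula_law_def PX_def Xv_def Uv_def joint_law_indep_uniforms[OF assms(1,2) U] ..
  finally show ?thesis
    unfolding PX_def Xv_def[abs_def] .
qed

lemma distr_marginal_componentwise:
  assumes sets_L: "sets L = sets (PiM I (\<lambda>_. borel))"
    and g_meas: "\<And>j. j \<in> I \<Longrightarrow> g j \<in> borel_measurable borel" and j: "j \<in> I"
  shows "distr (distr L (PiM I (\<lambda>_. borel)) (\<lambda>x. \<lambda>j\<in>I. g j (x j))) borel (\<lambda>x. x j)
    = distr (distr L borel (\<lambda>x. x j)) borel (g j)"
proof -
  have G_meas: "(\<lambda>x. \<lambda>j\<in>I. g j (x j)) \<in> measurable L (PiM I (\<lambda>_. borel))"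
    unfolding measurable_cong_sets[OF sets_L refl] using g_meas by (rule measurable_componentwise)
  have comp: "(\<lambda>x. x j) \<in> measurable L borel"
    unfolding measurable_cong_sets[OF sets_L refl] by (rule measurable_component_singleton[OF j])
  have "distr (distr L (PiM I (\<lambda>_. borel)) (\<lambda>x. \<lambda>j\<in>I. g j (x j))) borel (\<lambda>x. x j)
      = distr L borel ((\<lambda>x. x j) \<circ> (\<lambda>x. \<lambda>j\<in>I. g j (x j)))"
    by (rule distr_distr[OF measurable_component_singleton[OF j] G_meas])
  also have "(\<lambda>x. x j) \<circ> (\<lambda>x. \<lambda>j\<in>I. g j (x j)) = g j \<circ> (\<lambda>x. x j)"
    using j by (simp add: fun_eq_iff)
  also have "distr L borel (g j \<circ> (\<lambda>x. x j)) = distr (distr L borel (\<lambda>x. x j)) borel (g j)"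
    by (rule distr_distr[symmetric, OF g_meas[OF j] comp])
  finally show ?thesis .
qed

lemma distr_transform_vec_strict_monotone:
  fixes g :: "'i \<Rightarrow> real \<Rightarrow> real"
  assumes prob_L: "prob_space L" and sets_L: "sets L = sets (PiM I (\<lambda>_. borel))"
    and inc: "\<And>j. j \<in> I - S \<Longrightarrow> strict_mono (g j)"
    and dec: "\<And>j. j \<in> S \<Longrightarrow> strict_antimono_on UNIV (g j)"
  shows "distr_transform_vec I (distr L (PiM I (\<lambda>_. borel)) (\<lambda>x. \<lambda>j\<in>I. g j (x j)))
      (\<lambda>j\<in>I. g j (x j), reflect_coords I S u)
    = reflect_coords I S (distr_transform_vec I L (x, u))"
proof -
  let ?LG = "distr L (PiM I (\<lambda>_. borel)) (\<lambda>x. \<lambda>j\<in>I. g j (x j))"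
  have g_meas: "g j \<in> borel_measurable borel" if "j \<in> I" for j
    using that inc dec by (intro borel_measurable_strict_monotone) blast
  have "distr_transform (distr ?LG borel (\<lambda>x. x j)) (g j (x j)) (if j \<in> S then 1 - u j else u j)
      = (if j \<in> S then 1 - distr_transform (distr L borel (\<lambda>x. x j)) (x j) (u j)
         else distr_transform (distr L borel (\<lambda>x. x j)) (x j) (u j))" if j: "j \<in> I" for j
  proof -
    let ?mu = "distr L borel (\<lambda>x. x j)"
    have "(\<lambda>x. x j) \<in> measurable L borel"
      unfolding measurable_cong_sets[OF sets_L refl] by (rule measurable_component_singleton[OF j])
    then have prob_mu: "prob_space ?mu"
      by (rule prob_space.prob_space_distr[OF prob_L])
    note marginal = distr_marginal_componentwise[OF sets_L g_meas j]
    show ?thesis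
    proof (cases "j \<in> S")
      case True
      then show ?thesis
        using distr_transform_distr_strict_antimono[OF prob_mu _ dec[OF True], of "x j" "1 - u j"]
        by (simp add: marginal)
    next
      case False
      then show ?thesis
        using distr_transform_distr_strict_mono[of ?mu "g j" "x j" "u j"] inc[of j] j
        by (simp add: marginal)
    qed
  qed
  then show ?thesis
    by (simp add: distr_transform_vec_def reflect_coords_def restrict_def fun_eq_iff)
qed

lemma copula_law_distr_strict_monotone:
  fixes g :: "'i \<Rightarrow> real \<Rightarrow> real"
  assumes "finite I" and prob_L: "prob_space L" and sets_L: "sets L = sets (PiM I (\<lambda>_. borel))"
    and inc: "\<And>j. j \<in> I - S \<Longrightarrow> strict_mono (g j)"
    and dec: "\<And>j. j \<in> S \<Longrightarrow> strict_antimono_on UNIV (g j)"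
  shows "copula_law I (distr L (PiM I (\<lambda>_. borel)) (\<lambda>x. \<lambda>j\<in>I. g j (x j)))
    = distr (copula_law I L) (PiM I (\<lambda>_. borel)) (reflect_coords I S)"
proof -
  let ?P = "PiM I (\<lambda>_. borel) :: ('i \<Rightarrow> real) measure"
  let ?Q = "PiM I (\<lambda>_. uniform_measure lborel {0..1::real})"
  define G where "G x = (\<lambda>j\<in>I. g j (x j))" for x
  define R where "R = reflect_coords I S"
  define LG where "LG = distr L ?P G"
  have G_meas: "G \<in> measurable L ?P"
    unfolding G_def measurable_cong_sets[OF sets_L refl] using inc dec
    by (intro measurable_componentwise borel_measurable_strict_monotone) blast
  have "LG \<Otimes>\<^sub>M ?Q = distr (L \<Otimes>\<^sub>M ?Q) (?P \<Otimes>\<^sub>M ?P) (\<lambda>(x, u). (G x, R u))"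
    unfolding LG_def R_def by (rule pair_measure_distr_reflect_coords[OF assms(1) G_meas])
  moreover have "(\<lambda>(x, u). (G x, R u)) \<in> measurable (L \<Otimes>\<^sub>M ?Q) (?P \<Otimes>\<^sub>M ?P)"
    using G_meas measurable_reflect_coords_uniform unfolding R_def by measurable
  moreover have "distr_transform_vec I LG \<in> measurable (?P \<Otimes>\<^sub>M ?P) ?P"
    unfolding LG_def using prob_space.prob_space_distr[OF prob_L G_meas]
    by (intro measurable_distr_transform_vec) (simp_all add: prob_space.finite_measure)
  ultimately have "copula_law I LG
      = distr (L \<Otimes>\<^sub>M ?Q) ?P (distr_transform_vec I LG \<circ> (\<lambda>(x, u). (G x, R u)))"
    unfolding copula_law_def by (simp add: distr_distr)
  also have "distr_transform_vec I LG \<circ> (\<lambda>(x, u). (G x, R u)) = R \<circ> distr_transform_vec I L"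
    using distr_transform_vec_strict_monotone[where g=g and S=S, OF prob_L sets_L inc dec]
    by (simp add: fun_eq_iff LG_def G_def[abs_def] R_def split_beta')
  also have "distr (L \<Otimes>\<^sub>M ?Q) ?P (R \<circ> distr_transform_vec I L) = distr (copula_law I L) ?P R"
    unfolding copula_law_def R_def
    using measurable_distr_transform_vec_uniform[OF prob_space.finite_measure[OF prob_L] sets_L]
    by (rule distr_distr[symmetric, OF measurable_reflect_coords])
  finally show ?thesis
    unfolding LG_def G_def R_def .
qed

theorem dcop_strict_monotone_invariant:
  assumes fin: "finite I" and ne: "I \<noteq> {}"
    and trans: "translation_invariant d I" and sym: "elementwise_symmetric d I"
    and M: "prob_space M" and X: "\<And>j. j \<in> I \<Longrightarrow> X j \<in> borel_measurable M"
    and U: "indep_uniforms M I X U" and V: "indep_uniforms M I (\<lambda>j \<omega>. g j (X j \<omega>)) V"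
    and mono: "\<And>j. j \<in> I \<Longrightarrow> strict_mono (g j) \<or> strict_antimono_on UNIV (g j)"
  shows "dcop d M I X U = dcop d M I (\<lambda>j \<omega>. g j (X j \<omega>)) V"
proof -
  let ?P = "joint_space I"
  define S where "S = {j \<in> I. \<not> strict_mono (g j)}"
  define PX where "PX = distr M ?P (\<lambda>\<omega>. \<lambda>j\<in>I. X j \<omega>)"
  have g_meas: "\<And>j. j \<in> I \<Longrightarrow> g j \<in> borel_measurable borel"
    using mono by (rule borel_measurable_strict_monotone)
  have X_meas: "(\<lambda>\<omega>. \<lambda>j\<in>I. X j \<omega>) \<in> measurable M ?P"
    using X by (rule measurable_restrict)
  have PX_law: "is_joint_law I PX"
    unfolding PX_def is_joint_law_def using prob_space.prob_space_distr[OF M X_meas] by simp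
  have "(\<lambda>x. \<lambda>j\<in>I. g j (x j)) \<circ> (\<lambda>\<omega>. \<lambda>j\<in>I. X j \<omega>) = (\<lambda>\<omega>. \<lambda>j\<in>I. g j (X j \<omega>))"
    by (simp add: fun_eq_iff restrict_def)
  then have gX_law: "distr M ?P (\<lambda>\<omega>. \<lambda>j\<in>I. g j (X j \<omega>)) = distr PX ?P (\<lambda>x. \<lambda>j\<in>I. g j (x j))"
    unfolding PX_def using distr_distr[OF measurable_componentwise[OF g_meas] X_meas] by simp
  have "dcop d M I (\<lambda>j \<omega>. g j (X j \<omega>)) V = d (copula_law I (distr PX ?P (\<lambda>x. \<lambda>j\<in>I. g j (x j))))"
    unfolding dcop_def gX_law[symmetric] using ne M V X g_meas
    by (subst distr_transform_law_eq_copula_law) auto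
  also have "\<dots> = d (distr (copula_law I PX) ?P (reflect_coords I S))"
    using PX_law mono fin unfolding is_joint_law_def S_def
    by (subst copula_law_distr_strict_monotone) auto
  also have "\<dots> = d (copula_law I PX)"
  proof (rule dependence_measure_reflect_coords[OF trans sym])
    show "is_joint_law I (copula_law I PX)"
      using PX_law unfolding is_joint_law_def by (simp add: prob_space_copula_law)
    show "finite S" "S \<subseteq> I"
      using fin by (auto simp: S_def)
  qed
  also have "\<dots> = dcop d M I X U"
    unfolding dcop_def PX_def using ne M U X
    by (subst distr_transform_law_eq_copula_law) auto
  finally show ?thesis ..
qed

theorem mainTheorem2:
  fixes n :: nat and ds :: "nat \<Rightarrow> nat"
    and d :: "((nat \<times> nat) \<Rightarrow> real) measure \<Rightarrow> real"
    and M :: "'a measure"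
    and X U V :: "(nat \<times> nat) \<Rightarrow> 'a \<Rightarrow> real"
    and g :: "(nat \<times> nat) \<Rightarrow> real \<Rightarrow> real"
  assumes "n \<ge> 2"
    and "translation_invariant d (idx n ds)"
    and "elementwise_symmetric d (idx n ds)"
    and "prob_space M"
    and "\<forall>j\<in>idx n ds. X j \<in> borel_measurable M"
    and "indep_uniforms M (idx n ds) X U"
    and "indep_uniforms M (idx n ds) (\<lambda>j \<omega>. g j (X j \<omega>)) V"
    and "\<forall>j\<in>idx n ds. (\<forall>x y. x < y \<longrightarrow> g j x < g j y) \<or> (\<forall>x y. x < y \<longrightarrow> g j x > g j y)"
  shows "dcop d M (idx n ds) X U = dcop d M (idx n ds) (\<lambda>j \<omega>. g j (X j \<omega>)) V"
proof (cases "idx n ds = {}")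
  case True
  then show ?thesis
    unfolding dcop_def by (simp add: restrict_def)
next
  case False
  have "idx n ds = Sigma {..<n} (\<lambda>i. {..<ds i})"
    by (auto simp: idx_def)
  then have "finite (idx n ds)"
    by simp
  then show ?thesis
    using False assms(2-8)
    by (intro dcop_strict_monotone_invariant) (auto simp: strict_mono_def monotone_on_def)
qed

end
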